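(* Let $(\mathcal T_n)_{n\in\mathbb N_0}$ be a generalised preferential attachment tree with deterministic attachment function $f:\mathbb N_0\to(0,\infty)$, and assume that for some $\kappa>0$ and all $n\in\mathbb N_0$, \[\max_{i\le n}\frac{f(i)}{i+1}\le\kappa\frac{f(n)}{n+1}.\] Let $\mathcal M_n=\max_{u\in\mathcal T_n}\deg^+(u,\mathcal T_n)$. Then for every $\varepsilon>0$ there exists $r>0$ such that \[\mathbb P\big(\forall n\in\mathbb N:\ \mathcal M_n\,n^{-1/(2\kappa)}\ge r\big)\ge1-\varepsilon.\]
   Context: Generalised preferential attachment tree with deterministic $f:\mathbb N_0\to(0,\infty)$: $\mathcal T_0$ is a single node labelled $0$; given $\mathcal T_k$ (nodes $0,\dots,k$), choose a node $j$ with probability $f(\deg^+(j,\mathcal T_k))/\mathcal Z_k$, where $\mathcal Z_k=\sum_{j=0}^kf(\deg^+(j,\mathcal T_k))$, and add node $k+1$ with an edge directed from $j$ to $k+1$. $\deg^+(u,T)$ is the out-degree of $u$ in the directed tree $T$. *)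

theory Defs
  imports "HOL-Probability.Probability"
begin

text \<open>A tree T_k on nodes 0..k is encoded by the list ps of length k with
  ps ! i = parent of node i+1 (edge directed from ps ! i to i+1).\<close>

definition outdeg :: "nat list \<Rightarrow> nat \<Rightarrow> nat" where
  "outdeg ps u = length (filter (\<lambda>v. v = u) ps)"

definition pa_Z :: "(nat \<Rightarrow> real) \<Rightarrow> nat list \<Rightarrow> real" where
  "pa_Z f ps = (\<Sum>j\<le>length ps. f (outdeg ps j))"

text \<open>Inverse-transform sampling: given a uniform x in [0,1), choose node j
  with probability f(deg j)/Z.\<close>
definition pa_choose :: "(nat \<Rightarrow> real) \<Rightarrow> nat list \<Rightarrow> real \<Rightarrow> nat" where
  "pa_choose f ps x =
     (LEAST j. x < (\<Sum>i\<le>j. f (outdeg ps i)) / pa_Z f ps)"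

primrec pa_tree :: "(nat \<Rightarrow> real) \<Rightarrow> (nat \<Rightarrow> real) \<Rightarrow> nat \<Rightarrow> nat list" where
  "pa_tree f U 0 = []"
| "pa_tree f U (Suc k) = pa_tree f U k @ [pa_choose f (pa_tree f U k) (U k)]"

definition max_outdeg :: "(nat \<Rightarrow> real) \<Rightarrow> (nat \<Rightarrow> real) \<Rightarrow> nat \<Rightarrow> nat" where
  "max_outdeg f U n = Max ((\<lambda>u. outdeg (pa_tree f U n) u) ` {0..n})"

definition unif_seq :: "(nat \<Rightarrow> real) measure" where
  "unif_seq = PiM UNIV (\<lambda>_. uniform_measure lborel {0..<1::real})"

end

theory Submission
  imports Defs
begin

text \<open>
  Let M be the maximal out-degree and n the number of edges. With
  w(m) = \<Prod>i<m. (2i+1)/(2i+2), of order m^(-1/2), and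
  c(n) = \<Prod>i<n. (1 - 1/(2\<kappa>(2i+1)))^(-1), of order at least n^(1/(4\<kappa>)), the process
  Y = c(n) w(M) is a nonnegative supermartingale with Y = 1 at the start: by the growth
  condition the normaliser satisfies Z \<le> \<kappa> f(M) (2n+1)/(M+1), so a node of maximal degree
  is chosen with probability at least (M+1)/(\<kappa>(2n+1)), and then w(M) drops by the factor
  1 - 1/(2(M+1)).
  By Ville's maximal inequality, Y ever exceeds 1/\<epsilon> with probability at most \<epsilon>; but
  M n^(-1/(2\<kappa>)) < \<epsilon>^2/5 forces Y > 1/\<epsilon>, because w(m)^2 (4m+1) \<ge> 1.
  Below, w, c and Y are \<open>wallis_ratio\<close>, \<open>time_weight \<kappa>\<close> and \<open>pa_potential \<kappa>\<close>.
\<close>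

section \<open>Inverse transform sampling\<close>

definition inverse_transform :: "(nat \<Rightarrow> real) \<Rightarrow> nat \<Rightarrow> real \<Rightarrow> nat" where
  "inverse_transform w N x = (LEAST j. x < (\<Sum>i\<le>j. w i) / (\<Sum>i\<le>N. w i))"

lemma inverse_transform_eq_iff:
  assumes w: "\<And>i. i \<le> N \<Longrightarrow> 0 \<le> w i" and W: "0 < (\<Sum>i\<le>N. w i)"
    and x: "0 \<le> x" "x < 1"
  shows "inverse_transform w N x = j \<longleftrightarrow>
    j \<le> N \<and> (\<Sum>i<j. w i) / (\<Sum>i\<le>N. w i) \<le> x \<and> x < (\<Sum>i\<le>j. w i) / (\<Sum>i\<le>N. w i)"
proof -
  define W where "W = (\<Sum>i\<le>N. w i)"
  define P where "P j \<longleftrightarrow> x < (\<Sum>i\<le>j. w i) / W" for j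
  have prefix_mono: "(\<Sum>i\<le>a. w i) \<le> (\<Sum>i<b. w i)" if "a < b" "b \<le> N" for a b
    using that w by (intro sum_mono2) auto
  have "P N"
    using x W by (simp add: P_def W_def)
  then have least: "P (LEAST j. P j)" "(LEAST j. P j) \<le> N"
    by (auto intro: LeastI Least_le)
  have not_P: "\<not> P a" if "a < j" "j \<le> N" "(\<Sum>i<j. w i) / W \<le> x" for a j
  proof -
    have "(\<Sum>i\<le>a. w i) / W \<le> (\<Sum>i<j. w i) / W"
      using prefix_mono[OF that(1,2)] W by (simp add: W_def divide_right_mono)
    then show ?thesis using that(3) by (simp add: P_def)
  qed
  have "inverse_transform w N x = (LEAST j. P j)"
    by (simp add: inverse_transform_def P_def W_def)
  moreover have "(LEAST j. P j) = j \<longleftrightarrow> j \<le> N \<and> (\<Sum>i<j. w i) / W \<le> x \<and> P j"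
  proof
    assume j: "(LEAST j. P j) = j"
    have "(\<Sum>i<j. w i) / W \<le> x"
    proof (cases j)
      case (Suc i)
      then have "\<not> P i" using j not_less_Least[of i P] by simp
      then show ?thesis by (simp add: P_def Suc lessThan_Suc_atMost)
    qed (use x in simp)
    then show "j \<le> N \<and> (\<Sum>i<j. w i) / W \<le> x \<and> P j" using least j by simp
  next
    assume "j \<le> N \<and> (\<Sum>i<j. w i) / W \<le> x \<and> P j"
    then show "(LEAST j. P j) = j"
      using not_P by (intro Least_equality) (auto simp: not_le[symmetric])
  qed
  ultimately show ?thesis by (simp add: P_def W_def)
qed

lemma inverse_transform_le:
  assumes "\<And>i. i \<le> N \<Longrightarrow> 0 \<le> w i" "0 < (\<Sum>i\<le>N. w i)" "0 \<le> x" "x < 1"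
  shows "inverse_transform w N x \<le> N"
  using inverse_transform_eq_iff[OF assms] by blast

lemma measurable_inverse_transform [measurable]:
  "inverse_transform w N \<in> borel \<rightarrow>\<^sub>M count_space UNIV"
  unfolding inverse_transform_def by measurable

lemma measurable_uniform_measure_lborel:
  "uniform_measure lborel A \<rightarrow>\<^sub>M N = borel \<rightarrow>\<^sub>M N"
  by (rule measurable_cong_sets) auto

lemma emeasure_uniform_01_interval:
  assumes "0 \<le> a" "a \<le> b" "b \<le> 1"
  shows "emeasure (uniform_measure lborel {0..<1}) {a..<b} = ennreal (b - a)"
proof -
  have "{0..<1} \<inter> {a..<b} = {a..<b::real}" using assms by auto
  then show ?thesis
    using assms by (simp add: emeasure_uniform_measure divide_ennreal_def)
qed

lemma nn_integral_inverse_transform: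
  fixes h :: "nat \<Rightarrow> ennreal"
  assumes w: "\<And>i. i \<le> N \<Longrightarrow> 0 \<le> w i" and W: "0 < (\<Sum>i\<le>N. w i)"
  shows "(\<integral>\<^sup>+x. h (inverse_transform w N x) \<partial>uniform_measure lborel {0..<1}) =
    (\<Sum>j\<le>N. ennreal (w j / (\<Sum>i\<le>N. w i)) * h j)"
proof -
  define W where "W = (\<Sum>i\<le>N. w i)"
  define I where "I j = {(\<Sum>i<j. w i) / W ..< (\<Sum>i\<le>j. w i) / W}" for j
  have "h (inverse_transform w N x) = (\<Sum>j\<le>N. h j * indicator (I j) x)"
    if x: "x \<in> {0..<1}" for x
  proof -
    have "indicator (I j) x = (if j = inverse_transform w N x then 1 else (0::ennreal))"
      if "j \<le> N" for j
      using inverse_transform_eq_iff[OF w W, of x j] x that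
      by (auto simp: I_def W_def indicator_def)
    then have "(\<Sum>j\<le>N. h j * indicator (I j) x) = (\<Sum>j\<le>N. if j = inverse_transform w N x then h j else 0)"
      by (intro sum.cong) auto
    then show ?thesis
      using inverse_transform_le[OF w W, of x] x by simp
  qed
  then have "(\<integral>\<^sup>+x. h (inverse_transform w N x) \<partial>uniform_measure lborel {0..<1}) =
      (\<integral>\<^sup>+x. (\<Sum>j\<le>N. h j * indicator (I j) x) \<partial>uniform_measure lborel {0..<1})"
    by (intro nn_integral_cong_AE AE_uniform_measureI) auto
  also have "\<dots> = (\<Sum>j\<le>N. h j * emeasure (uniform_measure lborel {0..<1}) (I j))"
    by (subst nn_integral_sum) (auto simp: I_def simp del: emeasure_uniform_measure
        intro!: sum.cong nn_integral_cmult_indicator)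
  also have "\<dots> = (\<Sum>j\<le>N. ennreal (w j / W) * h j)"
  proof (intro sum.cong refl)
    fix j assume j: "j \<in> {..N}"
    have "0 \<le> (\<Sum>i<j. w i)" "(\<Sum>i<j. w i) \<le> (\<Sum>i\<le>j. w i)" "(\<Sum>i\<le>j. w i) \<le> W"
      using j w by (auto simp: W_def intro!: sum_nonneg sum_mono2)
    then have "emeasure (uniform_measure lborel {0..<1}) (I j) =
        ennreal ((\<Sum>i\<le>j. w i) / W - (\<Sum>i<j. w i) / W)"
      unfolding I_def using W by (intro emeasure_uniform_01_interval) (auto simp: W_def divide_right_mono)
    also have "(\<Sum>i\<le>j. w i) / W - (\<Sum>i<j. w i) / W = w j / W"
      by (simp add: lessThan_Suc_atMost[symmetric] diff_divide_distrib[symmetric])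
    finally show "h j * emeasure (uniform_measure lborel {0..<1}) (I j) = ennreal (w j / W) * h j"
      by (simp add: mult.commute)
  qed
  finally show ?thesis by (simp add: W_def)
qed

section \<open>Iterated random functions and Ville's inequality\<close>

primrec random_iterate :: "('s \<Rightarrow> 'a \<Rightarrow> 's) \<Rightarrow> 's \<Rightarrow> (nat \<Rightarrow> 'a) \<Rightarrow> nat \<Rightarrow> 's" where
  "random_iterate step s U 0 = s"
| "random_iterate step s U (Suc k) = step (random_iterate step s U k) (U k)"

lemma random_iterate_case_nat:
  "random_iterate step s (case_nat x U) (Suc k) = random_iterate step (step s x) U k"
  by (induction k) simp_all

lemma (in prob_space) emeasure_PiM_nat_split_first:
  assumes [measurable]: "X \<in> sets (\<Pi>\<^sub>M i\<in>UNIV. M)"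
  shows "emeasure (\<Pi>\<^sub>M i\<in>UNIV. M) X =
    (\<integral>\<^sup>+x. emeasure (\<Pi>\<^sub>M i\<in>UNIV. M) {U \<in> space (\<Pi>\<^sub>M i\<in>UNIV. M). case_nat x U \<in> X} \<partial>M)"
proof -
  interpret S: sequence_space M ..
  interpret P: pair_sigma_finite M S.S ..
  have [measurable]: "(\<lambda>(x, U). case_nat x U) \<in> M \<Otimes>\<^sub>M S.S \<rightarrow>\<^sub>M S.S"
    by measurable
  have "emeasure S.S X = (\<integral>\<^sup>+U. indicator X U \<partial>S.S)"
    by simp
  also have "\<dots> = (\<integral>\<^sup>+xU. indicator X ((\<lambda>(x, U). case_nat x U) xU) \<partial>(M \<Otimes>\<^sub>M S.S))"
    by (subst S.PiM_iter[symmetric]) (simp add: nn_integral_distr del: nn_integral_indicator)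
  also have "\<dots> = (\<integral>\<^sup>+x. \<integral>\<^sup>+U. indicator X ((\<lambda>(x, U). case_nat x U) (x, U)) \<partial>S.S \<partial>M)"
    by (subst S.nn_integral_fst) simp_all
  also have "\<dots> = (\<integral>\<^sup>+x. emeasure S.S {U \<in> space S.S. case_nat x U \<in> X} \<partial>M)"
  proof (intro nn_integral_cong)
    fix x assume "x \<in> space M"
    have "(\<lambda>U. case_nat x U) \<in> S.S \<rightarrow>\<^sub>M S.S"
      using \<open>x \<in> space M\<close> by measurable
    then have "{U \<in> space S.S. case_nat x U \<in> X} \<in> sets S.S"
      using measurable_sets[of _ S.S S.S X] by (simp add: vimage_def Int_def conj_commute)
    moreover have "(\<integral>\<^sup>+U. indicator X (case_nat x U) \<partial>S.S) =
        (\<integral>\<^sup>+U. indicator {U \<in> space S.S. case_nat x U \<in> X} U \<partial>S.S)"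
      by (intro nn_integral_cong) (simp split: split_indicator)
    ultimately show "(\<integral>\<^sup>+U. indicator X ((\<lambda>(x, U). case_nat x U) (x, U)) \<partial>S.S) =
        emeasure S.S {U \<in> space S.S. case_nat x U \<in> X}"
      by simp
  qed
  finally show ?thesis .
qed

lemma measurable_random_iterate:
  fixes step :: "'s::countable \<Rightarrow> 'a \<Rightarrow> 's"
  assumes step: "\<And>s. step s \<in> M \<rightarrow>\<^sub>M count_space UNIV"
  shows "(\<lambda>U. random_iterate step s U k) \<in> (\<Pi>\<^sub>M i\<in>UNIV. M) \<rightarrow>\<^sub>M count_space UNIV"
proof (induction k)
  case (Suc k)
  have "(\<lambda>U. step t (U k)) \<in> (\<Pi>\<^sub>M i\<in>UNIV. M) \<rightarrow>\<^sub>M count_space UNIV" for t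
    using measurable_compose[OF measurable_component_singleton[of k UNIV "\<lambda>_. M"] step] by simp
  from measurable_compose_countable[OF this Suc.IH] show ?case by simp
qed simp

lemma sets_random_iterate_hit:
  fixes step :: "'s::countable \<Rightarrow> 'a \<Rightarrow> 's"
  assumes "\<And>s. step s \<in> M \<rightarrow>\<^sub>M count_space UNIV"
  shows "{U \<in> space (\<Pi>\<^sub>M i\<in>UNIV. M). \<exists>k\<in>K. B (random_iterate step s U k)} \<in> sets (\<Pi>\<^sub>M i\<in>UNIV. M)"
proof -
  have "{U \<in> space (\<Pi>\<^sub>M i\<in>UNIV. M). \<exists>k\<in>K. B (random_iterate step s U k)} =
      (\<Union>k\<in>K. (\<lambda>U. random_iterate step s U k) -` {t. B t} \<inter> space (\<Pi>\<^sub>M i\<in>UNIV. M))"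
    by auto
  also have "\<dots> \<in> sets (\<Pi>\<^sub>M i\<in>UNIV. M)"
  proof (rule sets.countable_UN'')
    show "(\<lambda>U. random_iterate step s U k) -` {t. B t} \<inter> space (\<Pi>\<^sub>M i\<in>UNIV. M) \<in> sets (\<Pi>\<^sub>M i\<in>UNIV. M)" for k
      by (rule measurable_sets[OF measurable_random_iterate[OF assms]]) simp
  qed simp
  finally show ?thesis .
qed

lemma random_iterate_hit_case_nat:
  assumes "x \<in> space M" "\<not> B s"
  shows "{U \<in> space (\<Pi>\<^sub>M i\<in>UNIV. M). case_nat x U \<in>
      {U \<in> space (\<Pi>\<^sub>M i\<in>UNIV. M). \<exists>k\<in>{..Suc K}. B (random_iterate step s U k)}}
    = {U \<in> space (\<Pi>\<^sub>M i\<in>UNIV. M). \<exists>k\<in>{..K}. B (random_iterate step (step s x) U k)}"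
proof -
  have "case_nat x U \<in> space (\<Pi>\<^sub>M i\<in>UNIV. M) \<longleftrightarrow> U \<in> space (\<Pi>\<^sub>M i\<in>UNIV. M)" for U
    using assms(1) by (auto simp: space_PiM PiE_iff split: nat.splits)
  moreover have "(\<exists>k\<in>{..Suc K}. B (random_iterate step s (case_nat x U) k)) \<longleftrightarrow>
      (\<exists>k\<in>{..K}. B (random_iterate step (step s x) U k))" for U
    using assms(2)
    by (auto simp: atMost_Suc_eq_insert_0 random_iterate_case_nat simp del: random_iterate.simps(2))
  ultimately show ?thesis by auto
qed

text \<open>
  Ville's maximal inequality for a nonnegative supermartingale V of the chain
  s, step s U0, step (step s U0) U1, ... driven by i.i.d. innovations, proved by
  induction on the time horizon instead of optional stopping.
\<close>

lemma (in prob_space) random_iterate_hitting_bound_atMost: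
  fixes step :: "'s::countable \<Rightarrow> 'a \<Rightarrow> 's" and V :: "'s \<Rightarrow> ennreal"
  assumes step: "\<And>s. step s \<in> M \<rightarrow>\<^sub>M count_space UNIV"
    and invariant: "\<And>s. I s \<Longrightarrow> AE x in M. I (step s x)"
    and supermartingale: "\<And>s. I s \<Longrightarrow> (\<integral>\<^sup>+x. V (step s x) \<partial>M) \<le> V s"
    and hit: "\<And>s. I s \<Longrightarrow> B s \<Longrightarrow> c \<le> V s"
    and "I s"
  shows "c * emeasure (\<Pi>\<^sub>M i\<in>UNIV. M)
    {U \<in> space (\<Pi>\<^sub>M i\<in>UNIV. M). \<exists>k\<in>{..K}. B (random_iterate step s U k)} \<le> V s"
  using \<open>I s\<close>
proof (induction K arbitrary: s)
  interpret S: sequence_space M ..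
  define H where "H K s = {U \<in> space S.S. \<exists>k\<in>{..K}. B (random_iterate step s U k)}" for K s
  have H_sets: "H K s \<in> sets S.S" for K s
    unfolding H_def by (rule sets_random_iterate_hit[OF step])
  have start_hit: "c * emeasure S.S (H K s) \<le> V s" if "I s" "B s" for K s
  proof -
    have "c * emeasure S.S (H K s) \<le> c"
      using S.emeasure_le_1 by (intro mult_left_le) auto
    then show ?thesis using hit[OF that] by (rule order_trans)
  qed
  {
    case 0
    then show ?case
      using start_hit[of s 0] by (cases "B s") (simp_all add: H_def)
  next
    case (Suc K)
    show ?case
    proof (cases "B s")
      case False
      have shift: "{U \<in> space S.S. case_nat x U \<in> H (Suc K) s} = H K (step s x)"
        if "x \<in> space M" for x
        unfolding H_def using that False by (rule random_iterate_hit_case_nat)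
      have "c * emeasure S.S (H (Suc K) s) = c * (\<integral>\<^sup>+x. emeasure S.S (H K (step s x)) \<partial>M)"
        using H_sets by (simp add: emeasure_PiM_nat_split_first shift cong: nn_integral_cong)
      also have "\<dots> = (\<integral>\<^sup>+x. c * emeasure S.S (H K (step s x)) \<partial>M)"
        by (intro nn_integral_cmult[symmetric] measurable_compose[OF step borel_measurable_count_space])
      also have "\<dots> \<le> (\<integral>\<^sup>+x. V (step s x) \<partial>M)"
        using invariant[OF Suc.prems] by (intro nn_integral_mono_AE) (auto simp: H_def intro: Suc.IH)
      also have "\<dots> \<le> V s"
        using supermartingale[OF Suc.prems] .
      finally show ?thesis by (simp add: H_def)
    qed (use start_hit[OF Suc.prems] in \<open>simp add: H_def\<close>)
  }
qed

lemma (in prob_space) random_iterate_hitting_bound: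
  fixes step :: "'s::countable \<Rightarrow> 'a \<Rightarrow> 's" and V :: "'s \<Rightarrow> ennreal"
  assumes step: "\<And>s. step s \<in> M \<rightarrow>\<^sub>M count_space UNIV"
    and invariant: "\<And>s. I s \<Longrightarrow> AE x in M. I (step s x)"
    and supermartingale: "\<And>s. I s \<Longrightarrow> (\<integral>\<^sup>+x. V (step s x) \<partial>M) \<le> V s"
    and hit: "\<And>s. I s \<Longrightarrow> B s \<Longrightarrow> c \<le> V s"
    and "I s"
  shows "c * emeasure (\<Pi>\<^sub>M i\<in>UNIV. M)
    {U \<in> space (\<Pi>\<^sub>M i\<in>UNIV. M). \<exists>k. B (random_iterate step s U k)} \<le> V s"
proof -
  define H where "H K = {U \<in> space (\<Pi>\<^sub>M i\<in>UNIV. M). \<exists>k\<in>{..K}. B (random_iterate step s U k)}" for K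
  have "{U \<in> space (\<Pi>\<^sub>M i\<in>UNIV. M). \<exists>k. B (random_iterate step s U k)} = (\<Union>K. H K)"
    by (auto simp: H_def)
  moreover have "emeasure (\<Pi>\<^sub>M i\<in>UNIV. M) (\<Union>K. H K) = (SUP K. emeasure (\<Pi>\<^sub>M i\<in>UNIV. M) (H K))"
    using sets_random_iterate_hit[OF step]
    by (intro SUP_emeasure_incseq[symmetric]) (auto simp: H_def incseq_def)
  ultimately show ?thesis
    using random_iterate_hitting_bound_atMost[OF assms]
    by (simp add: SUP_mult_left_ennreal H_def SUP_least)
qed

section \<open>The preferential attachment chain\<close>

definition pa_step :: "(nat \<Rightarrow> real) \<Rightarrow> nat list \<Rightarrow> real \<Rightarrow> nat list" where
  "pa_step f ps x = ps @ [pa_choose f ps x]"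

lemma pa_tree_eq_random_iterate: "pa_tree f U n = random_iterate (pa_step f) [] U n"
  by (induction n) (simp_all add: pa_step_def)

lemma length_pa_tree [simp]: "length (pa_tree f U n) = n"
  by (induction n) simp_all

lemma pa_choose_eq_inverse_transform:
  "pa_choose f ps = inverse_transform (\<lambda>i. f (outdeg ps i)) (length ps)"
  by (simp add: fun_eq_iff pa_choose_def inverse_transform_def pa_Z_def)

lemma measurable_pa_step:
  "pa_step f ps \<in> uniform_measure lborel {0..<1} \<rightarrow>\<^sub>M count_space UNIV"
proof -
  have "pa_step f ps = (\<lambda>x. ps @ [inverse_transform (\<lambda>i. f (outdeg ps i)) (length ps) x])"
    by (simp add: fun_eq_iff pa_step_def pa_choose_eq_inverse_transform)
  then show ?thesis
    unfolding measurable_uniform_measure_lborel by simp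
qed

lemma nn_integral_pa_step:
  fixes h :: "nat list \<Rightarrow> ennreal"
  assumes "\<And>n. 0 < f n"
  shows "(\<integral>\<^sup>+x. h (pa_step f ps x) \<partial>uniform_measure lborel {0..<1}) =
    (\<Sum>j\<le>length ps. ennreal (f (outdeg ps j) / pa_Z f ps) * h (ps @ [j]))"
  using nn_integral_inverse_transform[of "length ps" "\<lambda>i. f (outdeg ps i)" "\<lambda>j. h (ps @ [j])"] assms
  by (simp add: pa_step_def pa_choose_eq_inverse_transform pa_Z_def less_imp_le sum_pos)

text \<open>
  Weaker than the tree property, but enough for the out-degrees of the nodes 0..n to add
  up to n.
\<close>

definition valid_parents :: "nat list \<Rightarrow> bool" where
  "valid_parents ps \<longleftrightarrow> (\<forall>v\<in>set ps. v \<le> length ps)"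

lemma valid_parents_pa_step:
  assumes "\<And>n. 0 < f n" "valid_parents ps" "0 \<le> x" "x < 1"
  shows "valid_parents (pa_step f ps x)"
  using inverse_transform_le[of "length ps" "\<lambda>i. f (outdeg ps i)" x] assms
  by (fastforce simp: valid_parents_def pa_step_def pa_choose_eq_inverse_transform less_imp_le sum_pos)

lemma outdeg_snoc: "outdeg (ps @ [j]) u = outdeg ps u + (if u = j then 1 else 0)"
  by (simp add: outdeg_def)

lemma sum_outdeg: "set ps \<subseteq> {..N} \<Longrightarrow> (\<Sum>j\<le>N. outdeg ps j) = length ps"
proof (induction ps)
  case (Cons a ps)
  have "outdeg (a # ps) j = outdeg ps j + (if j = a then 1 else 0)" for j
    by (simp add: outdeg_def)
  then show ?case using Cons by (simp add: sum.distrib)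
qed (simp add: outdeg_def)

definition max_outdeg_list :: "nat list \<Rightarrow> nat" where
  "max_outdeg_list ps = Max (outdeg ps ` {0..length ps})"

lemma max_outdeg_eq_max_outdeg_list: "max_outdeg f U n = max_outdeg_list (pa_tree f U n)"
  by (simp add: max_outdeg_def max_outdeg_list_def)

lemma outdeg_le_max_outdeg_list: "u \<le> length ps \<Longrightarrow> outdeg ps u \<le> max_outdeg_list ps"
  unfolding max_outdeg_list_def by (intro Max_ge) auto

lemma max_outdeg_list_attained:
  obtains u where "u \<le> length ps" "outdeg ps u = max_outdeg_list ps"
proof -
  have "max_outdeg_list ps \<in> outdeg ps ` {0..length ps}"
    unfolding max_outdeg_list_def by (intro Max_in) auto
  then show ?thesis using that by auto
qed

lemma max_outdeg_list_snoc: "max_outdeg_list ps \<le> max_outdeg_list (ps @ [j])"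
proof -
  obtain u where "u \<le> length ps" "outdeg ps u = max_outdeg_list ps"
    by (rule max_outdeg_list_attained)
  then show ?thesis
    using outdeg_le_max_outdeg_list[of u "ps @ [j]"] by (simp add: outdeg_snoc)
qed

lemma max_outdeg_list_snoc_argmax:
  assumes "u \<le> length ps" "outdeg ps u = max_outdeg_list ps"
  shows "Suc (max_outdeg_list ps) \<le> max_outdeg_list (ps @ [u])"
  using outdeg_le_max_outdeg_list[of u "ps @ [u]"] assms by (simp add: outdeg_snoc)

lemma max_outdeg_list_pos:
  assumes "valid_parents ps" "1 \<le> length ps"
  shows "1 \<le> max_outdeg_list ps"
proof (rule ccontr)
  assume "\<not> 1 \<le> max_outdeg_list ps"
  then have "(\<Sum>j\<le>length ps. outdeg ps j) = 0"
    using outdeg_le_max_outdeg_list[of _ ps] by fastforce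
  moreover have "(\<Sum>j\<le>length ps. outdeg ps j) = length ps"
    using assms(1) by (intro sum_outdeg) (auto simp: valid_parents_def)
  ultimately show False using assms(2) by simp
qed

lemma sets_max_outdeg_event:
  "{U \<in> space unif_seq. \<exists>n\<ge>1. P n (max_outdeg f U n)} \<in> sets unif_seq"
proof -
  have "{U \<in> space unif_seq. \<exists>n\<ge>1. P n (max_outdeg f U n)} =
      {U \<in> space (\<Pi>\<^sub>M i\<in>UNIV. uniform_measure lborel {0..<1}). \<exists>k\<in>{1..}.
        P (length (random_iterate (pa_step f) [] U k)) (max_outdeg_list (random_iterate (pa_step f) [] U k))}"
    by (auto simp: unif_seq_def max_outdeg_eq_max_outdeg_list simp flip: pa_tree_eq_random_iterate)
  also have "\<dots> \<in> sets (\<Pi>\<^sub>M i\<in>UNIV. uniform_measure lborel {0..<1})"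
    using measurable_pa_step
    by (rule sets_random_iterate_hit[where B = "\<lambda>ps. P (length ps) (max_outdeg_list ps)"])
  finally show ?thesis unfolding unif_seq_def .
qed

section \<open>The potential\<close>

definition wallis_ratio :: "nat \<Rightarrow> real" where
  "wallis_ratio m = (\<Prod>i<m. (2 * real i + 1) / (2 * real i + 2))"

lemma wallis_ratio_pos: "0 < wallis_ratio m"
  unfolding wallis_ratio_def by (intro prod_pos) auto

lemma wallis_ratio_Suc: "wallis_ratio (Suc m) = wallis_ratio m * (1 - 1 / (2 * (real m + 1)))"
  by (simp add: wallis_ratio_def field_simps)

lemma wallis_ratio_antimono: "m \<le> m' \<Longrightarrow> wallis_ratio m' \<le> wallis_ratio m"
proof (induction m' rule: dec_induct)
  case (step n)
  have "wallis_ratio (Suc n) \<le> wallis_ratio n"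
    using wallis_ratio_pos[of n] by (simp add: wallis_ratio_Suc mult_left_le)
  then show ?case using step.IH by linarith
qed simp

lemma wallis_ratio_sq_lower: "1 \<le> wallis_ratio m ^ 2 * (4 * real m + 1)"
proof (induction m)
  case (Suc m)
  have key: "(2 * real m + 2)^2 * (4 * real m + 1) \<le> (2 * real m + 1)^2 * (4 * real m + 5)"
    by (simp add: power2_eq_square algebra_simps)
  have "wallis_ratio m ^ 2 * (4 * real m + 1) =
      wallis_ratio m ^ 2 * ((2 * real m + 2)^2 * (4 * real m + 1)) / (2 * real m + 2)^2"
    by simp
  also have "\<dots> \<le> wallis_ratio m ^ 2 * ((2 * real m + 1)^2 * (4 * real m + 5)) / (2 * real m + 2)^2"
    using key by (intro divide_right_mono mult_left_mono) auto
  also have "\<dots> = wallis_ratio (Suc m) ^ 2 * (4 * real (Suc m) + 1)"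
    by (simp add: wallis_ratio_def power_mult_distrib power_divide)
  finally show ?case using Suc.IH by linarith
qed (simp add: wallis_ratio_def)

lemma wallis_ratio_max_outdeg_snoc:
  assumes "u \<le> length ps" "outdeg ps u = max_outdeg_list ps"
  shows "wallis_ratio (max_outdeg_list (ps @ [j])) \<le>
    wallis_ratio (max_outdeg_list ps) * (1 - (if j = u then 1 / (2 * (real (max_outdeg_list ps) + 1)) else 0))"
proof (cases "j = u")
  case True
  then have "wallis_ratio (max_outdeg_list (ps @ [j])) \<le> wallis_ratio (Suc (max_outdeg_list ps))"
    using max_outdeg_list_snoc_argmax[OF assms] by (intro wallis_ratio_antimono) simp
  then show ?thesis using True by (simp add: wallis_ratio_Suc)
next
  case False
  then show ?thesis
    using max_outdeg_list_snoc[of ps j] by (simp add: wallis_ratio_antimono)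
qed

definition time_weight :: "real \<Rightarrow> nat \<Rightarrow> real" where
  "time_weight k n = (\<Prod>i<n. 1 / (1 - 1 / (2 * k * (2 * real i + 1))))"

lemma time_weight_factor_bounds:
  assumes "1/2 < k"
  shows "0 < 1 / (2 * k * (2 * real n + 1))" "1 / (2 * k * (2 * real n + 1)) < 1"
proof -
  have "1 < 2 * k * 1" using assms by simp
  also have "\<dots> \<le> 2 * k * (2 * real n + 1)" using assms by (intro mult_left_mono) auto
  finally show "1 / (2 * k * (2 * real n + 1)) < 1" by simp
  show "0 < 1 / (2 * k * (2 * real n + 1))" using assms by simp
qed

lemma time_weight_pos: "1/2 < k \<Longrightarrow> 0 < time_weight k n"
  unfolding time_weight_def using time_weight_factor_bounds by (intro prod_pos) simp

lemma time_weight_Suc: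
  "1/2 < k \<Longrightarrow> time_weight k (Suc n) * (1 - 1 / (2 * k * (2 * real n + 1))) = time_weight k n"
  using time_weight_factor_bounds(2)[of k n] by (simp add: time_weight_def)

lemma time_weight_lower:
  assumes k: "1/2 < k"
  shows "(real n + 1) powr (1 / (4 * k)) \<le> time_weight k n"
proof (induction n)
  case (Suc n)
  define x where "x = 1 / (2 * k * (2 * real n + 1))"
  have x: "0 < x" "x < 1"
    using time_weight_factor_bounds[OF k] by (simp_all add: x_def)
  have "2 * k * (2 * real n + 1) \<le> 4 * k * (real n + 1)"
    using k by (simp add: algebra_simps)
  then have "1 / (4 * k * (real n + 1)) \<le> x"
    unfolding x_def using k by (intro divide_left_mono) auto
  have "ln (real n + 2) = ln ((real n + 1) * (1 + 1 / (real n + 1)))"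
    by (rule arg_cong[where f = ln]) (simp add: field_simps)
  also have "\<dots> = ln (real n + 1) + ln (1 + 1 / (real n + 1))"
    by (rule ln_mult_pos) (auto simp: add_pos_pos)
  also have "ln (1 + 1 / (real n + 1)) \<le> 1 / (real n + 1)"
    by (rule ln_add_one_self_le_self) simp
  finally have "1 / (4 * k) * ln (real n + 2) \<le> 1 / (4 * k) * (ln (real n + 1) + 1 / (real n + 1))"
    using k by (intro mult_left_mono) auto
  also have "\<dots> = 1 / (4 * k) * ln (real n + 1) + 1 / (4 * k * (real n + 1))"
    by (simp add: distrib_left)
  finally have "1 / (4 * k) * ln (real n + 2) \<le> 1 / (4 * k) * ln (real n + 1) + x"
    using \<open>1 / (4 * k * (real n + 1)) \<le> x\<close> by linarith
  then have "(real (Suc n) + 1) powr (1 / (4 * k)) \<le> (real n + 1) powr (1 / (4 * k)) * exp x"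
    by (simp add: powr_def exp_add[symmetric] add.commute)
  also have "\<dots> \<le> time_weight k n * (1 / (1 - x))"
  proof (rule mult_mono)
    show "exp x \<le> 1 / (1 - x)"
      using exp_ge_add_one_self[of "-x"] x by (simp add: exp_minus field_simps)
  qed (use Suc.IH time_weight_pos[OF k, of n] in auto)
  also have "\<dots> = time_weight k (Suc n)"
    using time_weight_Suc[OF k, of n] x by (simp add: x_def field_simps)
  finally show ?case .
qed (simp add: time_weight_def)

definition pa_potential :: "real \<Rightarrow> nat list \<Rightarrow> real" where
  "pa_potential k ps = time_weight k (length ps) * wallis_ratio (max_outdeg_list ps)"

lemma pa_potential_nonneg: "1/2 < k \<Longrightarrow> 0 \<le> pa_potential k ps"
  unfolding pa_potential_def using time_weight_pos wallis_ratio_pos by (simp add: less_imp_le)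

lemma pa_potential_Nil: "pa_potential k [] = 1"
  by (simp add: pa_potential_def time_weight_def wallis_ratio_def max_outdeg_list_def outdeg_def)

lemma pa_potential_sq_lower:
  assumes k: "1/2 < k" and ps: "valid_parents ps" "1 \<le> length ps"
  shows "real (length ps) powr (1 / (2 * k)) \<le> 5 * real (max_outdeg_list ps) * pa_potential k ps ^ 2"
proof -
  define n M where "n = length ps" and "M = max_outdeg_list ps"
  have M: "1 \<le> M" using max_outdeg_list_pos[OF ps] by (simp add: M_def)
  have "real n powr (1 / (2 * k)) = (real n powr (1 / (4 * k)))^2"
    by (simp add: power2_eq_square powr_add[symmetric])
  also have "\<dots> \<le> ((real n + 1) powr (1 / (4 * k)))^2"
    using k by (intro power_mono powr_mono2) auto
  also have "\<dots> \<le> time_weight k n ^ 2"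
    using k by (intro power_mono time_weight_lower) auto
  also have "\<dots> \<le> time_weight k n ^ 2 * (wallis_ratio M ^ 2 * (4 * real M + 1))"
    using wallis_ratio_sq_lower[of M] by (simp add: mult_le_cancel_left1)
  also have "\<dots> \<le> time_weight k n ^ 2 * (wallis_ratio M ^ 2 * (5 * real M))"
    using M by (intro mult_left_mono) auto
  also have "\<dots> = 5 * real M * pa_potential k ps ^ 2"
    by (simp add: pa_potential_def n_def M_def power_mult_distrib)
  finally show ?thesis by (simp add: n_def M_def)
qed

lemma pa_potential_ge_if_small_max_outdeg:
  assumes k: "1/2 < k" and \<epsilon>: "0 < \<epsilon>" and ps: "valid_parents ps" "1 \<le> length ps"
    and small: "real (max_outdeg_list ps) * real (length ps) powr (- 1 / (2 * k)) < \<epsilon>^2 / 5"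
  shows "1 / \<epsilon> \<le> pa_potential k ps"
proof -
  define a M Y where "a = 1 / (2 * k)" and "M = max_outdeg_list ps" and "Y = pa_potential k ps"
  have M: "0 < real M" using max_outdeg_list_pos[OF ps] by (simp add: M_def)
  have n: "0 < real (length ps) powr a" using ps(2) by (simp add: Suc_le_eq)
  have "real (length ps) powr (- 1 / (2 * k)) = inverse (real (length ps) powr a)"
    unfolding a_def by (subst minus_divide_left[symmetric]) (rule powr_minus)
  then have "real M / real (length ps) powr a < \<epsilon>^2 / 5"
    using small by (simp only: M_def divide_inverse)
  then have "5 * real M < \<epsilon>^2 * real (length ps) powr a"
    using n by (simp add: pos_divide_less_eq)
  also have "\<dots> \<le> \<epsilon>^2 * (5 * real M * Y^2)"
    using pa_potential_sq_lower[OF k ps] by (intro mult_left_mono) (simp_all add: a_def M_def Y_def)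
  finally have "5 * real M * 1 < 5 * real M * (\<epsilon> * Y)^2"
    by (simp only: power_mult_distrib mult_ac mult_1_right)
  then have "1 ^ 2 < (\<epsilon> * Y)^2"
    using M by (simp only: mult_less_cancel_left_pos) simp
  then have "1 < \<epsilon> * Y"
    using pa_potential_nonneg[OF k, of ps] \<epsilon> by (intro power_less_imp_less_base[of 1 2]) (simp_all add: Y_def)
  then show ?thesis
    using \<epsilon> by (simp add: Y_def pos_divide_le_eq mult.commute)
qed

section \<open>Sublinear attachment functions\<close>

locale sublinear_attachment =
  fixes f :: "nat \<Rightarrow> real" and \<kappa> :: real
  assumes f_pos: "\<And>n. 0 < f n"
    and growth: "\<And>n i. i \<le> n \<Longrightarrow> f i / (real i + 1) \<le> \<kappa> * f n / (real n + 1)"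
begin

lemma kappa_ge_1: "1 \<le> \<kappa>"
  using growth[of 0 0] f_pos[of 0] by simp

lemma pa_Z_le_max_outdeg:
  assumes "valid_parents ps"
  shows "pa_Z f ps \<le>
    \<kappa> * f (max_outdeg_list ps) / (real (max_outdeg_list ps) + 1) * (2 * real (length ps) + 1)"
proof -
  define n M where "n = length ps" and "M = max_outdeg_list ps"
  have "pa_Z f ps = (\<Sum>j\<le>n. (real (outdeg ps j) + 1) * (f (outdeg ps j) / (real (outdeg ps j) + 1)))"
    by (simp add: pa_Z_def n_def)
  also have "\<dots> \<le> (\<Sum>j\<le>n. (real (outdeg ps j) + 1) * (\<kappa> * f M / (real M + 1)))"
    using outdeg_le_max_outdeg_list[of _ ps]
    by (intro sum_mono mult_left_mono growth) (auto simp: n_def M_def)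
  also have "\<dots> = \<kappa> * f M / (real M + 1) * (\<Sum>j\<le>n. real (outdeg ps j) + 1)"
    by (simp add: sum_distrib_left mult.commute)
  also have "(\<Sum>j\<le>n. real (outdeg ps j) + 1) = 2 * real n + 1"
    using sum_outdeg[of ps n] assms
    by (simp add: sum.distrib n_def valid_parents_def subset_iff flip: of_nat_sum)
  finally show ?thesis by (simp add: n_def M_def)
qed

lemma max_outdeg_attach_prob_ge:
  assumes "valid_parents ps"
  shows "(real (max_outdeg_list ps) + 1) / (\<kappa> * (2 * real (length ps) + 1))
    \<le> f (max_outdeg_list ps) / pa_Z f ps"
proof -
  define n M where "n = length ps" and "M = max_outdeg_list ps"
  have "\<kappa> * f M / (real M + 1) * (2 * real n + 1) = f M * (\<kappa> * (2 * real n + 1) / (real M + 1))"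
    by simp
  then have "(real M + 1) / (\<kappa> * (2 * real n + 1)) = f M / (\<kappa> * f M / (real M + 1) * (2 * real n + 1))"
    using f_pos[of M] by simp
  also have "\<dots> \<le> f M / pa_Z f ps"
    using pa_Z_le_max_outdeg[OF assms] f_pos[of M] kappa_ge_1 f_pos
    by (intro divide_left_mono) (simp_all add: n_def M_def pa_Z_def sum_pos less_imp_le)
  finally show ?thesis by (simp add: n_def M_def)
qed

lemma expected_wallis_ratio_le:
  assumes "valid_parents ps"
  shows "(\<Sum>j\<le>length ps. f (outdeg ps j) / pa_Z f ps * wallis_ratio (max_outdeg_list (ps @ [j])))
    \<le> wallis_ratio (max_outdeg_list ps) * (1 - 1 / (2 * \<kappa> * (2 * real (length ps) + 1)))"
proof -
  define n M where "n = length ps" and "M = max_outdeg_list ps"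
  define p where "p j = f (outdeg ps j) / pa_Z f ps" for j
  define c where "c = 1 / (2 * (real M + 1))"
  obtain u where u: "u \<le> n" "outdeg ps u = M"
    using max_outdeg_list_attained unfolding n_def M_def by blast
  have Z: "0 < pa_Z f ps"
    unfolding pa_Z_def using f_pos by (intro sum_pos) auto
  have p_nonneg: "0 \<le> p j" for j
    using Z f_pos[of "outdeg ps j"] by (simp add: p_def)
  have p_sum: "(\<Sum>j\<le>n. p j) = 1"
    using Z by (simp add: p_def pa_Z_def n_def flip: sum_divide_distrib)
  have "(real M + 1) / (\<kappa> * (2 * real n + 1)) * c \<le> p u * c"
    using max_outdeg_attach_prob_ge[OF assms] u
    by (intro mult_right_mono) (simp_all add: c_def p_def n_def M_def)
  moreover have "(real M + 1) / (\<kappa> * (2 * real n + 1)) * c = 1 / (2 * \<kappa> * (2 * real n + 1))"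
    using kappa_ge_1 by (simp add: c_def divide_simps) (simp add: algebra_simps)
  ultimately have p_u: "1 / (2 * \<kappa> * (2 * real n + 1)) \<le> p u * c"
    by simp
  have next_le: "wallis_ratio (max_outdeg_list (ps @ [j])) \<le> wallis_ratio M * (1 - (if j = u then c else 0))"
    for j
    unfolding c_def M_def using u by (intro wallis_ratio_max_outdeg_snoc) (simp_all add: n_def M_def)
  have "(\<Sum>j\<le>n. p j * wallis_ratio (max_outdeg_list (ps @ [j]))) \<le>
      (\<Sum>j\<le>n. p j * (wallis_ratio M * (1 - (if j = u then c else 0))))"
    using next_le p_nonneg by (intro sum_mono mult_left_mono) auto
  also have "\<dots> = wallis_ratio M * (\<Sum>j\<le>n. p j - (if j = u then p j * c else 0))"
    unfolding sum_distrib_left by (intro sum.cong) (auto simp: algebra_simps)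
  also have "\<dots> = wallis_ratio M * (1 - p u * c)"
    using u(1) p_sum by (simp add: sum_subtractf)
  also have "\<dots> \<le> wallis_ratio M * (1 - 1 / (2 * \<kappa> * (2 * real n + 1)))"
    using p_u wallis_ratio_pos[of M] by (intro mult_left_mono) auto
  finally show ?thesis by (simp only: p_def n_def M_def)
qed

lemma pa_potential_supermartingale:
  assumes "valid_parents ps"
  shows "(\<integral>\<^sup>+x. ennreal (pa_potential \<kappa> (pa_step f ps x)) \<partial>uniform_measure lborel {0..<1})
    \<le> ennreal (pa_potential \<kappa> ps)"
proof -
  define n p where "n = length ps" and "p j = f (outdeg ps j) / pa_Z f ps" for j
  have k: "1/2 < \<kappa>" using kappa_ge_1 by simp
  have p_nonneg: "0 \<le> p j" for j
    unfolding p_def pa_Z_def using f_pos by (intro divide_nonneg_pos sum_pos less_imp_le) auto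
  have "(\<integral>\<^sup>+x. ennreal (pa_potential \<kappa> (pa_step f ps x)) \<partial>uniform_measure lborel {0..<1}) =
      (\<Sum>j\<le>n. ennreal (p j) * ennreal (pa_potential \<kappa> (ps @ [j])))"
    unfolding n_def p_def by (rule nn_integral_pa_step[OF f_pos])
  also have "\<dots> = (\<Sum>j\<le>n. ennreal (p j * pa_potential \<kappa> (ps @ [j])))"
    by (intro sum.cong refl ennreal_mult[symmetric] p_nonneg pa_potential_nonneg[OF k])
  also have "\<dots> = ennreal (\<Sum>j\<le>n. p j * pa_potential \<kappa> (ps @ [j]))"
    by (intro sum_ennreal mult_nonneg_nonneg p_nonneg pa_potential_nonneg[OF k])
  also have "\<dots> \<le> ennreal (pa_potential \<kappa> ps)"
  proof (rule ennreal_leI)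
    have "(\<Sum>j\<le>n. p j * pa_potential \<kappa> (ps @ [j])) =
        time_weight \<kappa> (Suc n) * (\<Sum>j\<le>n. p j * wallis_ratio (max_outdeg_list (ps @ [j])))"
      by (simp add: pa_potential_def sum_distrib_left mult_ac n_def)
    also have "\<dots> \<le> time_weight \<kappa> (Suc n) *
        (wallis_ratio (max_outdeg_list ps) * (1 - 1 / (2 * \<kappa> * (2 * real n + 1))))"
      using expected_wallis_ratio_le[OF assms] time_weight_pos[OF k]
      by (intro mult_left_mono) (simp_all add: p_def n_def less_imp_le)
    also have "\<dots> = pa_potential \<kappa> ps"
      using time_weight_Suc[OF k, of n] by (simp add: pa_potential_def n_def mult_ac)
    finally show "(\<Sum>j\<le>n. p j * pa_potential \<kappa> (ps @ [j])) \<le> pa_potential \<kappa> ps" .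
  qed
  finally show ?thesis .
qed

lemma pa_potential_maximal_inequality:
  assumes "\<And>ps. valid_parents ps \<Longrightarrow> B ps \<Longrightarrow> c \<le> pa_potential \<kappa> ps"
  shows "ennreal c * emeasure unif_seq {U \<in> space unif_seq. \<exists>n. B (pa_tree f U n)} \<le> 1"
proof -
  interpret U01: prob_space "uniform_measure lborel {0..<1::real}"
    by (rule prob_space_uniform_measure) auto
  have "ennreal c * emeasure unif_seq {U \<in> space unif_seq. \<exists>n. B (pa_tree f U n)}
      \<le> ennreal (pa_potential \<kappa> [])"
    unfolding unif_seq_def pa_tree_eq_random_iterate
  proof (rule U01.random_iterate_hitting_bound[where I = valid_parents and B = B and s = "[]"
        and V = "\<lambda>ps. ennreal (pa_potential \<kappa> ps)"])
    show "pa_step f ps \<in> uniform_measure lborel {0..<1} \<rightarrow>\<^sub>M count_space UNIV" for ps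
      by (rule measurable_pa_step)
    show "AE x in uniform_measure lborel {0..<1}. valid_parents (pa_step f ps x)"
      if "valid_parents ps" for ps
      using that f_pos by (intro AE_uniform_measureI) (auto intro: valid_parents_pa_step)
    show "(\<integral>\<^sup>+x. ennreal (pa_potential \<kappa> (pa_step f ps x)) \<partial>uniform_measure lborel {0..<1})
        \<le> ennreal (pa_potential \<kappa> ps)" if "valid_parents ps" for ps
      using that by (rule pa_potential_supermartingale)
    show "ennreal c \<le> ennreal (pa_potential \<kappa> ps)" if "valid_parents ps" "B ps" for ps
      using assms[OF that] by (rule ennreal_leI)
  qed (simp add: valid_parents_def)
  then show ?thesis by (simp add: pa_potential_Nil)
qed

lemma emeasure_small_max_outdeg:
  assumes \<epsilon>: "0 < \<epsilon>"
  shows "emeasure unif_seq {U \<in> space unif_seq. \<exists>n\<ge>1.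
    real (max_outdeg f U n) * real n powr (- 1 / (2 * \<kappa>)) < \<epsilon>^2 / 5} \<le> ennreal \<epsilon>"
proof -
  define B where "B ps \<longleftrightarrow> 1 \<le> length ps \<and>
    real (max_outdeg_list ps) * real (length ps) powr (- 1 / (2 * \<kappa>)) < \<epsilon>^2 / 5" for ps
  define X where "X = {U \<in> space unif_seq. \<exists>n. B (pa_tree f U n)}"
  have bound: "ennreal (1 / \<epsilon>) * emeasure unif_seq X \<le> 1"
    unfolding X_def using \<epsilon> kappa_ge_1
    by (intro pa_potential_maximal_inequality pa_potential_ge_if_small_max_outdeg) (auto simp: B_def)
  have "emeasure unif_seq X = ennreal \<epsilon> * (ennreal (1 / \<epsilon>) * emeasure unif_seq X)"
    using \<epsilon> by (simp add: mult.assoc[symmetric] flip: ennreal_mult)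
  also have "\<dots> \<le> ennreal \<epsilon>"
    using mult_left_mono[OF bound, of "ennreal \<epsilon>"] by simp
  also have "X = {U \<in> space unif_seq. \<exists>n\<ge>1.
      real (max_outdeg f U n) * real n powr (- 1 / (2 * \<kappa>)) < \<epsilon>^2 / 5}"
    by (auto simp: X_def B_def max_outdeg_eq_max_outdeg_list)
  finally show ?thesis .
qed

end

theorem lemma3p12:
  fixes f :: "nat \<Rightarrow> real" and \<kappa> :: real
  assumes fpos: "\<And>n. f n > 0"
    and kpos: "\<kappa> > 0"
    and growth: "\<And>n i. i \<le> n \<Longrightarrow> f i / (real i + 1) \<le> \<kappa> * f n / (real n + 1)"
  shows "\<forall>\<epsilon>>0. \<exists>r>0.
    measure unif_seq {U \<in> space unif_seq. \<forall>n\<ge>1.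
        real (max_outdeg f U n) * real n powr (- 1 / (2 * \<kappa>)) \<ge> r} \<ge> 1 - \<epsilon>"
proof (intro allI impI)
  fix \<epsilon> :: real
  assume \<epsilon>: "\<epsilon> > 0"
  interpret sublinear_attachment f \<kappa>
    using fpos growth by unfold_locales
  interpret prob_space unif_seq
    unfolding unif_seq_def by (intro prob_space_PiM prob_space_uniform_measure) auto
  define small where "small = {U \<in> space unif_seq. \<exists>n\<ge>1.
    real (max_outdeg f U n) * real n powr (- 1 / (2 * \<kappa>)) < \<epsilon>^2 / 5}"
  have small_event: "small \<in> events"
    unfolding small_def
    by (rule sets_max_outdeg_event[where P = "\<lambda>n m. real m * real n powr (- 1 / (2 * \<kappa>)) < \<epsilon>^2 / 5"])
  have "prob small \<le> \<epsilon>"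
    using emeasure_small_max_outdeg[OF \<epsilon>] \<epsilon> by (simp add: small_def emeasure_eq_measure)
  moreover have "{U \<in> space unif_seq. \<forall>n\<ge>1.
      real (max_outdeg f U n) * real n powr (- 1 / (2 * \<kappa>)) \<ge> \<epsilon>^2 / 5} = space unif_seq - small"
    by (auto simp: small_def not_less)
  ultimately show "\<exists>r>0. prob {U \<in> space unif_seq. \<forall>n\<ge>1.
      real (max_outdeg f U n) * real n powr (- 1 / (2 * \<kappa>)) \<ge> r} \<ge> 1 - \<epsilon>"
    using prob_compl[OF small_event] \<epsilon> by (intro exI[of _ "\<epsilon>^2 / 5"]) auto
qed

end
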